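(* Let $N\ge3$, $P>0$, $\tau\in(0,1)$, $\sigma_t>0$, $c_5\in\mathbb{C}$, $\alpha,\beta\in\mathbb{C}$ with $|\alpha|^2+|\beta|^2=1$. Let $\theta\in(-\pi/2,\pi/2)$ and $\mathbf{h}\in\mathbb{C}^N$ be random with $\mathbf{h}\notin\mathrm{span}(\mathbf{a}(\theta))$ almost surely. Let $\tilde{\mathbf{a}}=\mathbf{a}(\theta)/\|\mathbf{a}(\theta)\|$, $\tilde{\mathbf{h}}=\frac{\mathbf{h}-(\tilde{\mathbf{a}}^H\mathbf{h})\tilde{\mathbf{a}}}{\|\mathbf{h}-(\tilde{\mathbf{a}}^H\mathbf{h})\tilde{\mathbf{a}}\|}$, $\mathbf{t}_1=\alpha\tilde{\mathbf{a}}+\beta\tilde{\mathbf{h}}$, $\mathbf{t}_3,\dots,\mathbf{t}_N$ an orthonormal basis of the orthogonal complement of $\mathrm{span}\{\tilde{\mathbf{a}},\tilde{\mathbf{h}}\}$, and $$\mathrm{SINR}_t=\frac{P\tau|c_5|^2|\mathbf{a}^H\mathbf{t}_1|^2}{\sigma_t^2+\frac{|c_5|^2P(1-\tau)}{N-2}\sum_{i=3}^N|\mathbf{a}^H\mathbf{t}_i|^2}.$$ Then $\mathbb{E}_{\mathbf{h},\theta}[\log(1+\mathrm{SINR}_t)]=\log\big(1+\frac{P\tau|c_5|^2|\alpha|^2N}{\sigma_t^2}\big)$.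
   Context: $j=\sqrt{-1}$. $\mathbf{a}(\theta)\in\mathbb{C}^N$ has $i$-th entry $e^{-j\pi\sin(\theta)\frac{N-(2i-1)}{2}}$. $\mathrm{SINR}_t$ is the SINR at a malicious target acting as communication eavesdropper under the SSJB scheme; the quantity computed is the ergodic information leakage rate to the target. *)

theory Defs
  imports "HOL-Probability.Probability"
begin

text \<open>Vectors in C^N are represented as functions nat => complex; only the
entries 0..N-1 are used (0-based: entry k corresponds to the paper's index k+1).\<close>

definition steer :: "nat \<Rightarrow> real \<Rightarrow> nat \<Rightarrow> complex" where
  "steer N \<theta> k = exp (- \<i> * of_real (pi * sin \<theta> * (real N - (2 * real k + 1)) / 2))"

definition cinner :: "nat \<Rightarrow> (nat \<Rightarrow> complex) \<Rightarrow> (nat \<Rightarrow> complex) \<Rightarrow> complex" where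
  "cinner N u v = (\<Sum>k<N. cnj (u k) * v k)"

definition cnorm :: "nat \<Rightarrow> (nat \<Rightarrow> complex) \<Rightarrow> real" where
  "cnorm N u = sqrt (\<Sum>k<N. (cmod (u k))\<^sup>2)"

definition atil :: "nat \<Rightarrow> real \<Rightarrow> nat \<Rightarrow> complex" where
  "atil N \<theta> = (\<lambda>k. steer N \<theta> k / of_real (cnorm N (steer N \<theta>)))"

definition htil :: "nat \<Rightarrow> real \<Rightarrow> (nat \<Rightarrow> complex) \<Rightarrow> nat \<Rightarrow> complex" where
  "htil N \<theta> h = (let r = (\<lambda>k. h k - cinner N (atil N \<theta>) h * atil N \<theta> k)
                  in (\<lambda>k. r k / of_real (cnorm N r)))"

definition tvec1 :: "nat \<Rightarrow> complex \<Rightarrow> complex \<Rightarrow> real \<Rightarrow> (nat \<Rightarrow> complex) \<Rightarrow> nat \<Rightarrow> complex" where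
  "tvec1 N \<alpha> \<beta> \<theta> h = (\<lambda>k. \<alpha> * atil N \<theta> k + \<beta> * htil N \<theta> h k)"

text \<open>The other beamformers t_3..t_N are indexed i = 2..N-1 (0-based) by the family T.\<close>
definition SINR_t :: "nat \<Rightarrow> real \<Rightarrow> real \<Rightarrow> real \<Rightarrow> complex \<Rightarrow> complex \<Rightarrow> complex \<Rightarrow>
    real \<Rightarrow> (nat \<Rightarrow> complex) \<Rightarrow> (nat \<Rightarrow> nat \<Rightarrow> complex) \<Rightarrow> real" where
  "SINR_t N P \<tau> \<sigma>t c5 \<alpha> \<beta> \<theta> h T =
     P * \<tau> * (cmod c5)\<^sup>2 * (cmod (cinner N (steer N \<theta>) (tvec1 N \<alpha> \<beta> \<theta> h)))\<^sup>2 /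
     (\<sigma>t\<^sup>2 + (cmod c5)\<^sup>2 * P * (1 - \<tau>) / (real N - 2) *
        (\<Sum>i\<in>{2..<N}. (cmod (cinner N (steer N \<theta>) (T i)))\<^sup>2))"

definition is_compl_onb :: "nat \<Rightarrow> (nat \<Rightarrow> complex) \<Rightarrow> (nat \<Rightarrow> complex) \<Rightarrow> (nat \<Rightarrow> nat \<Rightarrow> complex) \<Rightarrow> bool" where
  "is_compl_onb N u w T \<longleftrightarrow>
     (\<forall>i\<in>{2..<N}. \<forall>j\<in>{2..<N}. cinner N (T i) (T j) = (if i = j then 1 else 0)) \<and>
     (\<forall>i\<in>{2..<N}. cinner N u (T i) = 0 \<and> cinner N w (T i) = 0) \<and>
     (\<forall>v. cinner N u v = 0 \<and> cinner N w v = 0 \<longrightarrow>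
          (\<exists>c. \<forall>k<N. v k = (\<Sum>i\<in>{2..<N}. c i * T i k)))"

end

theory Submission
  imports Defs
begin

text \<open>The steering vector is parallel to \<open>atil\<close>, so every \<open>T i\<close>, being orthogonal to \<open>atil\<close>,
  is invisible to the target and the interference sum vanishes; since \<open>htil\<close> is orthogonal
  to \<open>atil\<close>, the signal term is \<open>|a\<^sup>H t\<^sub>1|\<^sup>2 = N |\<alpha>|\<^sup>2\<close>. Hence \<open>SINR_t\<close> is almost surely
  the constant \<open>P \<tau> |c\<^sub>5|\<^sup>2 |\<alpha>|\<^sup>2 N / \<sigma>\<^sub>t\<^sup>2\<close>, and so is the leakage rate.\<close>

lemma cinner_divide_left: "cinner N (\<lambda>k. u k / c) v = cinner N u v / cnj c"
  unfolding cinner_def by (simp add: sum_divide_distrib)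

lemma cinner_divide_right: "cinner N u (\<lambda>k. v k / c) = cinner N u v / c"
  unfolding cinner_def by (simp add: sum_divide_distrib)

lemma cinner_diff_scale_right: "cinner N u (\<lambda>k. v k - c * w k) = cinner N u v - c * cinner N u w"
  unfolding cinner_def by (simp add: sum_subtractf sum_distrib_left algebra_simps)

lemma cinner_lincomb_right:
  "cinner N u (\<lambda>k. a * v k + b * w k) = a * cinner N u v + b * cinner N u w"
  unfolding cinner_def by (simp add: sum.distrib sum_distrib_left algebra_simps)

lemma cinner_self_eq_cnorm_square: "cinner N u u = of_real ((cnorm N u)\<^sup>2)"
proof -
  have "cnj z * z = of_real ((cmod z)\<^sup>2)" for z :: complex
    by (metis complex_norm_square mult.commute of_real_power)
  then show ?thesis
    unfolding cinner_def cnorm_def by (simp add: sum_nonneg)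
qed

lemma cinner_normalize_self:
  assumes "cnorm N u \<noteq> 0"
  shows "cinner N (\<lambda>k. u k / of_real (cnorm N u)) (\<lambda>k. u k / of_real (cnorm N u)) = 1"
  using assms
  by (simp add: cinner_divide_left cinner_divide_right cinner_self_eq_cnorm_square
      power2_eq_square flip: of_real_mult)

lemma cinner_gram_schmidt_residual:
  assumes "cinner N u u = 1"
  shows "cinner N u (\<lambda>k. (v k - cinner N u v * u k) / c) = 0"
  using assms by (simp add: cinner_divide_right cinner_diff_scale_right)

lemma norm_steer [simp]: "cmod (steer N \<theta> k) = 1"
proof -
  have "- \<i> * of_real x = \<i> * of_real (- x)" for x :: real
    by simp
  then show ?thesis
    unfolding steer_def by (simp only: norm_exp_i_times)
qed

lemma cnorm_steer: "cnorm N (steer N \<theta>) = sqrt (real N)"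
  unfolding cnorm_def by simp

lemma cinner_atil_atil: "N \<ge> 1 \<Longrightarrow> cinner N (atil N \<theta>) (atil N \<theta>) = 1"
  unfolding atil_def by (rule cinner_normalize_self) (simp add: cnorm_steer)

lemma cinner_atil_htil: "N \<ge> 1 \<Longrightarrow> cinner N (atil N \<theta>) (htil N \<theta> h) = 0"
  unfolding htil_def Let_def by (rule cinner_gram_schmidt_residual) (rule cinner_atil_atil)

lemma cinner_steer_eq_atil:
  "cinner N (steer N \<theta>) v = of_real (sqrt (real N)) * cinner N (atil N \<theta>) v"
  by (cases "N = 0") (simp_all add: atil_def cnorm_steer cinner_divide_left, simp add: cinner_def)

lemma SINR_t_eq_constant:
  assumes "N \<ge> 3" and "\<forall>i\<in>{2..<N}. cinner N (atil N \<theta>) (T i) = 0"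
  shows "SINR_t N P \<tau> \<sigma>t c5 \<alpha> \<beta> \<theta> h T = P * \<tau> * (cmod c5)\<^sup>2 * (cmod \<alpha>)\<^sup>2 * real N / \<sigma>t\<^sup>2"
proof -
  have "N \<ge> 1"
    using assms(1) by simp
  have interference: "(\<Sum>i\<in>{2..<N}. (cmod (cinner N (steer N \<theta>) (T i)))\<^sup>2) = 0"
    using assms(2) by (simp add: cinner_steer_eq_atil)
  have "cinner N (steer N \<theta>) (tvec1 N \<alpha> \<beta> \<theta> h) = of_real (sqrt (real N)) * \<alpha>"
    unfolding tvec1_def cinner_steer_eq_atil cinner_lincomb_right
    using \<open>N \<ge> 1\<close> by (simp add: cinner_atil_atil cinner_atil_htil)
  then have signal: "(cmod (cinner N (steer N \<theta>) (tvec1 N \<alpha> \<beta> \<theta> h)))\<^sup>2 = real N * (cmod \<alpha>)\<^sup>2"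
    by (simp add: norm_mult power_mult_distrib)
  show ?thesis
    unfolding SINR_t_def interference signal by simp
qed

lemma borel_measurable_cnj [measurable]: "(cnj :: complex \<Rightarrow> complex) \<in> borel_measurable borel"
  by (intro borel_measurable_continuous_onI continuous_intros)

lemma borel_measurable_steer [measurable]: "(\<lambda>\<theta>. steer N \<theta> k) \<in> borel_measurable borel"
  unfolding steer_def by (intro borel_measurable_continuous_onI continuous_intros) auto

lemma borel_measurable_leakage_rate:
  assumes [measurable]: "\<theta> \<in> borel_measurable M"
    and [measurable]: "\<And>k. (\<lambda>\<omega>. h \<omega> k) \<in> borel_measurable M"
    and [measurable]: "\<And>i k. (\<lambda>\<omega>. T \<omega> i k) \<in> borel_measurable M"
  shows "(\<lambda>\<omega>. log 2 (1 + SINR_t N P \<tau> \<sigma>t c5 \<alpha> \<beta> (\<theta> \<omega>) (h \<omega>) (T \<omega>))) \<in> borel_measurable M"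
  unfolding SINR_t_def tvec1_def htil_def atil_def Let_def cinner_def cnorm_def
  by measurable

theorem lemma12:
  fixes M :: "'w measure" and N :: nat and P \<tau> \<sigma>t :: real and c5 \<alpha> \<beta> :: complex
    and \<theta> :: "'w \<Rightarrow> real" and h :: "'w \<Rightarrow> nat \<Rightarrow> complex"
    and T :: "'w \<Rightarrow> nat \<Rightarrow> nat \<Rightarrow> complex"
  assumes "prob_space M"
    and "N \<ge> 3" and "P > 0" and "0 < \<tau>" and "\<tau> < 1" and "\<sigma>t > 0"
    and "(cmod \<alpha>)\<^sup>2 + (cmod \<beta>)\<^sup>2 = 1"
    and "\<theta> \<in> borel_measurable M"
    and "\<And>k. (\<lambda>\<omega>. h \<omega> k) \<in> borel_measurable M"
    and "\<And>i k. (\<lambda>\<omega>. T \<omega> i k) \<in> borel_measurable M"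
    and "AE \<omega> in M. - (pi / 2) < \<theta> \<omega> \<and> \<theta> \<omega> < pi / 2"
    and "AE \<omega> in M. \<not> (\<exists>c. \<forall>k<N. h \<omega> k = c * steer N (\<theta> \<omega>) k)"
    and "AE \<omega> in M. is_compl_onb N (atil N (\<theta> \<omega>)) (htil N (\<theta> \<omega>) (h \<omega>)) (T \<omega>)"
  shows "(\<integral>\<omega>. log 2 (1 + SINR_t N P \<tau> \<sigma>t c5 \<alpha> \<beta> (\<theta> \<omega>) (h \<omega>) (T \<omega>)) \<partial>M)
           = log 2 (1 + P * \<tau> * (cmod c5)\<^sup>2 * (cmod \<alpha>)\<^sup>2 * real N / \<sigma>t\<^sup>2)"
proof -
  interpret prob_space M by fact
  let ?rate = "log 2 (1 + P * \<tau> * (cmod c5)\<^sup>2 * (cmod \<alpha>)\<^sup>2 * real N / \<sigma>t\<^sup>2)"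
  have "AE \<omega> in M. log 2 (1 + SINR_t N P \<tau> \<sigma>t c5 \<alpha> \<beta> (\<theta> \<omega>) (h \<omega>) (T \<omega>)) = ?rate"
    using assms(13) by eventually_elim (use assms(2) in \<open>simp add: is_compl_onb_def SINR_t_eq_constant\<close>)
  then have "(\<integral>\<omega>. log 2 (1 + SINR_t N P \<tau> \<sigma>t c5 \<alpha> \<beta> (\<theta> \<omega>) (h \<omega>) (T \<omega>)) \<partial>M) = (\<integral>\<omega>. ?rate \<partial>M)"
    by (intro integral_cong_AE borel_measurable_leakage_rate assms(8-10)) simp_all
  also have "\<dots> = ?rate"
    by (simp add: prob_space)
  finally show ?thesis .
qed

end
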